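(* Let $R$ be an associative (unital) ring and let $\sigma\colon R\to R$ be an additive surjection with $\sigma(1)=1$. If $R$ is right Noetherian, then the non-associative skew power series ring $R[[X;\sigma]]$ is right Noetherian.
   Context: A right ideal of a non-associative ring $S$ is an additive subgroup $I$ with $Is\subseteq I$ for all $s\in S$; $S$ is right Noetherian if it satisfies the ascending chain condition on right ideals. $R[[X;\sigma]]$ is the set of formal power series $\sum_{i=0}^\infty r_iX^i$ with $r_i\in R$, with pointwise addition and multiplication $\left(\sum_m a_mX^m\right)\left(\sum_n b_nX^n\right)=\sum_{k}\left(\sum_{m+n=k}a_m\sigma^m(b_n)\right)X^k$, i.e. the extension of $(rX^m)(sX^n)=(r\sigma^m(s))X^{m+n}$ for $r,s\in R$, $m,n\in\mathbb{N}$; it is a unital, not necessarily associative ring. *)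

theory Defs
  imports "HOL-Computational_Algebra.Formal_Power_Series"
begin

definition right_ideal_wrt :: "('b::ab_group_add \<Rightarrow> 'b \<Rightarrow> 'b) \<Rightarrow> 'b set \<Rightarrow> bool" where
  "right_ideal_wrt mul I \<longleftrightarrow>
     0 \<in> I \<and> (\<forall>x\<in>I. \<forall>y\<in>I. x - y \<in> I) \<and> (\<forall>x\<in>I. \<forall>s. mul x s \<in> I)"

definition right_noetherian_wrt :: "('b::ab_group_add \<Rightarrow> 'b \<Rightarrow> 'b) \<Rightarrow> bool" where
  "right_noetherian_wrt mul \<longleftrightarrow>
     (\<forall>I :: nat \<Rightarrow> 'b set. (\<forall>n. right_ideal_wrt mul (I n)) \<and> (\<forall>n. I n \<subseteq> I (Suc n))
        \<longrightarrow> (\<exists>N. \<forall>n\<ge>N. I n = I N))"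

definition skew_fps_mult :: "('a::ring_1 \<Rightarrow> 'a) \<Rightarrow> 'a fps \<Rightarrow> 'a fps \<Rightarrow> 'a fps" where
  "skew_fps_mult \<sigma> f g = Abs_fps (\<lambda>k. \<Sum>m\<le>k. fps_nth f m * (\<sigma> ^^ m) (fps_nth g (k - m)))"

end

theory Submission
  imports Defs
begin

text \<open>As in the Hilbert basis theorem for power series, a right ideal \<open>I\<close> of \<open>R[[X;\<sigma>]]\<close> is
  controlled by its initial ideals \<open>L\<^sub>n(I)\<close>, the \<open>n\<close>-th coefficients of the elements of order
  at least \<open>n\<close>. They are right ideals of \<open>R\<close> because \<open>\<sigma>\<close> is surjective, and increase with \<open>n\<close>
  because \<open>\<sigma>(1) = 1\<close>. For an ascending chain \<open>I\<^sub>j\<close> the array \<open>L\<^sub>n(I\<^sub>j)\<close> is monotone in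
  both indices and therefore becomes constant in \<open>j\<close> uniformly in \<open>n\<close>. Finally, comparable right
  ideals \<open>I \<subseteq> J\<close> with the same initial ideals are equal: once \<open>L\<^sub>n(I)\<close> is constant for
  \<open>n \<ge> N\<close>, finitely many generators of \<open>L\<^sub>N(I)\<close> reach every element of \<open>J\<close> of order \<open>\<ge> N\<close> by
  successive approximation, and the lower orders follow by descending induction.\<close>

unbundle fps_syntax

section \<open>Right ideals and right Noetherian rings\<close>

lemma right_ideal_wrt_zero: "right_ideal_wrt mul I \<Longrightarrow> 0 \<in> I"
  unfolding right_ideal_wrt_def by blast

lemma right_ideal_wrt_diff: "right_ideal_wrt mul I \<Longrightarrow> x \<in> I \<Longrightarrow> y \<in> I \<Longrightarrow> x - y \<in> I"
  unfolding right_ideal_wrt_def by blast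

lemma right_ideal_wrt_mul: "right_ideal_wrt mul I \<Longrightarrow> x \<in> I \<Longrightarrow> mul x s \<in> I"
  unfolding right_ideal_wrt_def by blast

lemma right_ideal_wrt_add:
  assumes "right_ideal_wrt mul I" "x \<in> I" "y \<in> I"
  shows "x + y \<in> I"
proof -
  have "x - (0 - y) \<in> I"
    using assms by (intro right_ideal_wrt_diff right_ideal_wrt_zero) auto
  then show ?thesis by simp
qed

lemma right_ideal_wrt_sum:
  assumes "right_ideal_wrt mul I" "\<And>a. a \<in> A \<Longrightarrow> g a \<in> I"
  shows "sum g A \<in> I"
  using assms(2)
proof (induction A rule: infinite_finite_induct)
  case (insert x F)
  then show ?case using right_ideal_wrt_add[OF assms(1)] by simp
qed (simp_all add: right_ideal_wrt_zero[OF assms(1)])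

lemma right_noetherian_wrtD:
  assumes "right_noetherian_wrt mul" "\<And>n. right_ideal_wrt mul (I n)" "\<And>n. I n \<subseteq> I (Suc n)"
  shows "\<exists>N. \<forall>n\<ge>N. I n = I N"
  using assms unfolding right_noetherian_wrt_def by blast

text \<open>Beyond the stabilisation point \<open>N\<close> of the diagonal all entries agree, and each of the
  finitely many columns \<open>n < N\<close> stabilises on its own.\<close>

lemma right_noetherian_wrt_array_stable:
  fixes L :: "nat \<Rightarrow> nat \<Rightarrow> 'a::ab_group_add set"
  assumes noeth: "right_noetherian_wrt mul"
    and ideal: "\<And>n j. right_ideal_wrt mul (L n j)"
    and mono: "\<And>n n' j j'. n \<le> n' \<Longrightarrow> j \<le> j' \<Longrightarrow> L n j \<subseteq> L n' j'"
  shows "\<exists>M. \<forall>n j. M \<le> j \<longrightarrow> L n j = L n M"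
proof -
  have "\<exists>N. \<forall>n\<ge>N. L n n = L N N"
    by (rule right_noetherian_wrtD[OF noeth]) (simp_all add: ideal mono)
  then obtain N where N: "\<And>n. N \<le> n \<Longrightarrow> L n n = L N N" by blast
  have corner: "L n j = L N N" if "N \<le> n" "N \<le> j" for n j
  proof
    have "L n j \<subseteq> L (max n j) (max n j)" by (rule mono) auto
    then show "L n j \<subseteq> L N N" using N that by (metis le_max_iff_disj)
    show "L N N \<subseteq> L n j" using that by (rule mono)
  qed
  have "\<exists>c. \<forall>j\<ge>c. L n j = L n c" for n
    by (rule right_noetherian_wrtD[OF noeth]) (simp_all add: ideal mono)
  then obtain C where C: "\<And>n j. C n \<le> j \<Longrightarrow> L n j = L n (C n)"
    using choice[of "\<lambda>n c. \<forall>j\<ge>c. L n j = L n c"] by blast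
  define M where "M = N + (\<Sum>n<N. C n)"
  have "L n j = L n M" if "M \<le> j" for n j
  proof (cases "N \<le> n")
    case True
    moreover have "N \<le> M" by (simp add: M_def)
    ultimately show ?thesis using corner[of n j] corner[of n M] that by simp
  next
    case False
    then have "C n \<le> M" unfolding M_def using member_le_sum[of n "{..<N}" C] by simp
    then show ?thesis using C that by (metis order_trans)
  qed
  then show ?thesis by blast
qed

definition right_span :: "'a::ring_1 set \<Rightarrow> 'a set" where
  "right_span A = {\<Sum>a\<in>A. a * r a | r. True}"

lemma right_span_right_ideal: "right_ideal_wrt (*) (right_span A)"
  unfolding right_ideal_wrt_def
proof (intro conjI ballI allI)
  show "0 \<in> right_span A"
    unfolding right_span_def by (rule CollectI, rule exI[of _ "\<lambda>_. 0"]) simp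
next
  fix x y assume "x \<in> right_span A" "y \<in> right_span A"
  then obtain r r' where "x = (\<Sum>a\<in>A. a * r a)" "y = (\<Sum>a\<in>A. a * r' a)"
    unfolding right_span_def by blast
  then show "x - y \<in> right_span A" unfolding right_span_def
    by (intro CollectI exI[of _ "\<lambda>a. r a - r' a"]) (simp add: right_diff_distrib sum_subtractf)
next
  fix x s assume "x \<in> right_span A"
  then obtain r where "x = (\<Sum>a\<in>A. a * r a)" unfolding right_span_def by blast
  then show "x * s \<in> right_span A" unfolding right_span_def
    by (intro CollectI exI[of _ "\<lambda>a. r a * s"]) (simp add: sum_distrib_right mult.assoc)
qed

lemma right_span_insert_mono:
  assumes "finite A"
  shows "right_span A \<subseteq> right_span (insert x A)"
proof (cases "x \<in> A")
  case False
  show ?thesis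
  proof
    fix y assume "y \<in> right_span A"
    then obtain r where r: "y = (\<Sum>a\<in>A. a * r a)" unfolding right_span_def by blast
    have "(\<Sum>a\<in>insert x A. a * (r(x := 0)) a) = y"
      unfolding r using False assms by (auto intro: sum.cong)
    then show "y \<in> right_span (insert x A)" unfolding right_span_def by blast
  qed
qed (simp add: insert_absorb)

lemma right_span_insert_mem:
  assumes "finite A"
  shows "x \<in> right_span (insert x A)"
proof -
  have "(\<Sum>a\<in>insert x A. a * (if a = x then 1 else 0)) = x"
    using assms by (simp add: if_distrib cong: if_cong)
  then show ?thesis unfolding right_span_def
    by (intro CollectI exI[of _ "\<lambda>a. if a = x then 1 else 0"]) simp
qed

lemma right_noetherian_finite_generators:
  fixes L :: "'a::ring_1 set"
  assumes noeth: "right_noetherian_wrt ((*) :: 'a \<Rightarrow> 'a \<Rightarrow> 'a)"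
  shows "\<exists>A. finite A \<and> A \<subseteq> L \<and> L \<subseteq> right_span A"
proof (rule ccontr)
  assume "\<not> ?thesis"
  then have new: "\<exists>x. x \<in> L \<and> x \<notin> right_span A" if "finite A" "A \<subseteq> L" for A
    using that by blast
  define next_gen where "next_gen A = (SOME x. x \<in> L \<and> x \<notin> right_span A)" for A
  define F where "F = rec_nat {} (\<lambda>_ A. insert (next_gen A) A)"
  have F_Suc: "F (Suc n) = insert (next_gen (F n)) (F n)" for n
    by (simp add: F_def)
  have next_gen: "next_gen A \<in> L \<and> next_gen A \<notin> right_span A" if "finite A" "A \<subseteq> L" for A
    unfolding next_gen_def by (rule someI_ex[OF new[OF that]])
  have F: "finite (F n) \<and> F n \<subseteq> L" for n
  proof (induction n)
    case (Suc n)
    then show ?case using next_gen[of "F n"] by (simp add: F_Suc)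
  qed (simp add: F_def)
  have "\<exists>N. \<forall>n\<ge>N. right_span (F n) = right_span (F N)"
  proof (rule right_noetherian_wrtD[OF noeth])
    show "right_span (F n) \<subseteq> right_span (F (Suc n))" for n
      unfolding F_Suc using F by (intro right_span_insert_mono) simp
  qed (rule right_span_right_ideal)
  then obtain N where "right_span (F (Suc N)) = right_span (F N)"
    using le_SucI by blast
  then show False
    using next_gen[of "F N"] right_span_insert_mem[of "F N"] F unfolding F_Suc by blast
qed

section \<open>The skew power series ring\<close>

lemma funpow_additive:
  fixes \<sigma> :: "'a::plus \<Rightarrow> 'a"
  assumes "\<And>x y. \<sigma> (x + y) = \<sigma> x + \<sigma> y"
  shows "(\<sigma> ^^ n) (x + y) = (\<sigma> ^^ n) x + (\<sigma> ^^ n) y"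
  by (induction n) (simp_all add: assms)

lemma funpow_additive_zero:
  fixes \<sigma> :: "'a::group_add \<Rightarrow> 'a"
  assumes "\<And>x y. \<sigma> (x + y) = \<sigma> x + \<sigma> y"
  shows "(\<sigma> ^^ n) 0 = 0"
  using funpow_additive[of \<sigma> n 0 0, OF assms] by (metis add.right_neutral add_left_cancel)

lemma funpow_fixed_point: "f x = x \<Longrightarrow> (f ^^ n) x = x"
  by (induction n) simp_all

lemma skew_fps_mult_nth:
  "skew_fps_mult \<sigma> f g $ k = (\<Sum>m\<le>k. f $ m * (\<sigma> ^^ m) (g $ (k - m)))"
  by (simp add: skew_fps_mult_def)

lemma skew_fps_mult_add_right:
  fixes \<sigma> :: "'a::ring_1 \<Rightarrow> 'a"
  assumes "\<And>x y. \<sigma> (x + y) = \<sigma> x + \<sigma> y"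
  shows "skew_fps_mult \<sigma> f (g + g') = skew_fps_mult \<sigma> f g + skew_fps_mult \<sigma> f g'"
  by (rule fps_ext) (simp add: skew_fps_mult_nth funpow_additive[OF assms] distrib_left sum.distrib)

lemma skew_fps_mult_zero_right:
  fixes \<sigma> :: "'a::ring_1 \<Rightarrow> 'a"
  assumes "\<And>x y. \<sigma> (x + y) = \<sigma> x + \<sigma> y"
  shows "skew_fps_mult \<sigma> f 0 = 0"
  by (rule fps_ext) (simp add: skew_fps_mult_nth funpow_additive_zero[OF assms])

lemma skew_fps_mult_nth_cong:
  assumes "\<And>t. t \<le> m \<Longrightarrow> g $ t = g' $ t"
  shows "skew_fps_mult \<sigma> f g $ m = skew_fps_mult \<sigma> f g' $ m"
  unfolding skew_fps_mult_nth using assms by (intro sum.cong) auto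

lemma skew_fps_mult_monom_nth:
  fixes \<sigma> :: "'a::ring_1 \<Rightarrow> 'a"
  assumes "\<And>x y. \<sigma> (x + y) = \<sigma> x + \<sigma> y"
  shows "skew_fps_mult \<sigma> f (fps_const c * fps_X ^ k) $ m
           = (if k \<le> m then f $ (m - k) * (\<sigma> ^^ (m - k)) c else 0)"
proof -
  have "skew_fps_mult \<sigma> f (fps_const c * fps_X ^ k) $ m
          = (\<Sum>i\<le>m. if i = m - k \<and> k \<le> m then f $ i * (\<sigma> ^^ i) c else 0)"
    unfolding skew_fps_mult_nth
    by (intro sum.cong) (auto simp: funpow_additive_zero[OF assms])
  then show ?thesis by simp
qed

section \<open>Initial ideals\<close>

definition initial_ideal :: "nat \<Rightarrow> 'a::zero fps set \<Rightarrow> 'a set" where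
  "initial_ideal n I = {f $ n | f. f \<in> I \<and> (\<forall>i<n. f $ i = 0)}"

lemma initial_idealI: "f \<in> I \<Longrightarrow> \<forall>i<n. f $ i = 0 \<Longrightarrow> f $ n = x \<Longrightarrow> x \<in> initial_ideal n I"
  unfolding initial_ideal_def by blast

lemma initial_idealE:
  assumes "x \<in> initial_ideal n I"
  obtains f where "f \<in> I" "\<forall>i<n. f $ i = 0" "f $ n = x"
  using assms unfolding initial_ideal_def by blast

lemma initial_ideal_mono: "I \<subseteq> J \<Longrightarrow> initial_ideal n I \<subseteq> initial_ideal n J"
  unfolding initial_ideal_def by blast

text \<open>Surjectivity of \<open>\<sigma>\<close> is what makes the initial ideals closed under right multiplication:
  multiplying by the constant \<open>t\<close> multiplies the \<open>n\<close>-th coefficient by \<open>\<sigma>\<^sup>n(t)\<close>.\<close>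

lemma initial_ideal_right_ideal:
  fixes \<sigma> :: "'a::ring_1 \<Rightarrow> 'a"
  assumes additive: "\<And>x y. \<sigma> (x + y) = \<sigma> x + \<sigma> y" and surj: "surj \<sigma>"
    and I: "right_ideal_wrt (skew_fps_mult \<sigma>) I"
  shows "right_ideal_wrt (*) (initial_ideal n I)"
  unfolding right_ideal_wrt_def
proof (intro conjI ballI allI)
  show "0 \<in> initial_ideal n I"
    using right_ideal_wrt_zero[OF I] by (intro initial_idealI) auto
next
  fix x y assume "x \<in> initial_ideal n I" "y \<in> initial_ideal n I"
  then obtain f g where "f \<in> I" "\<forall>i<n. f $ i = 0" "f $ n = x" "g \<in> I" "\<forall>i<n. g $ i = 0" "g $ n = y"
    by (metis initial_idealE)
  then show "x - y \<in> initial_ideal n I"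
    by (intro initial_idealI[of "f - g"]) (auto intro: right_ideal_wrt_diff[OF I])
next
  fix x s assume "x \<in> initial_ideal n I"
  then obtain f where f: "f \<in> I" "\<forall>i<n. f $ i = 0" "f $ n = x"
    by (rule initial_idealE)
  obtain t where t: "(\<sigma> ^^ n) t = s" using surj_fn[OF surj, of n] by (metis surjD)
  let ?g = "skew_fps_mult \<sigma> f (fps_const t * fps_X ^ 0)"
  have "?g \<in> I" by (rule right_ideal_wrt_mul[OF I f(1)])
  moreover have "\<forall>i<n. ?g $ i = 0" "?g $ n = x * s"
    using f t skew_fps_mult_monom_nth[OF additive, of f t 0] by simp_all
  ultimately show "x * s \<in> initial_ideal n I" by (rule initial_idealI)
qed

lemma initial_ideal_shift:
  fixes \<sigma> :: "'a::ring_1 \<Rightarrow> 'a"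
  assumes additive: "\<And>x y. \<sigma> (x + y) = \<sigma> x + \<sigma> y" and one: "\<sigma> 1 = 1"
    and I: "right_ideal_wrt (skew_fps_mult \<sigma>) I" and "n \<le> n'"
  shows "initial_ideal n I \<subseteq> initial_ideal n' I"
proof
  fix x assume "x \<in> initial_ideal n I"
  then obtain f where f: "f \<in> I" "\<forall>i<n. f $ i = 0" "f $ n = x"
    by (rule initial_idealE)
  let ?g = "skew_fps_mult \<sigma> f (fps_const 1 * fps_X ^ (n' - n))"
  have "?g \<in> I" by (rule right_ideal_wrt_mul[OF I f(1)])
  moreover have "\<forall>i<n'. ?g $ i = 0" "?g $ n' = x"
    using f \<open>n \<le> n'\<close> skew_fps_mult_monom_nth[OF additive, of f 1 "n' - n"]
    by (auto simp: funpow_fixed_point[of \<sigma>, OF one])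
  ultimately show "x \<in> initial_ideal n' I" by (rule initial_idealI)
qed

section \<open>Comparable right ideals with equal initial ideals\<close>

lemma skew_fps_cancel_initial_coeff:
  fixes \<sigma> :: "'a::ring_1 \<Rightarrow> 'a"
  assumes additive: "\<And>x y. \<sigma> (x + y) = \<sigma> x + \<sigma> y"
    and h: "\<And>a. a \<in> A \<Longrightarrow> \<forall>i<N. h a $ i = 0"
    and g: "\<forall>i<N + k. g $ i = 0" "g $ (N + k) = (\<Sum>a\<in>A. h a $ N * (\<sigma> ^^ N) (c a))"
  shows "\<forall>i<N + Suc k. (g - (\<Sum>a\<in>A. skew_fps_mult \<sigma> (h a) (fps_const (c a) * fps_X ^ k))) $ i = 0"
    (is "\<forall>i<_. ?rest $ i = 0")
proof (intro allI impI)
  fix i assume i: "i < N + Suc k"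
  have "?rest $ i = g $ i - (\<Sum>a\<in>A. if k \<le> i then h a $ (i - k) * (\<sigma> ^^ (i - k)) (c a) else 0)"
    by (simp add: fps_sum_nth skew_fps_mult_monom_nth[OF additive])
  also have "\<dots> = 0"
  proof (cases "i < N + k")
    case True
    then show ?thesis using g(1) h by (auto intro!: sum.neutral)
  next
    case False
    then have "i = N + k" using i by simp
    then show ?thesis using g(2) by simp
  qed
  finally show "?rest $ i = 0" .
qed

lemma skew_fps_cancel_initial_coeff_ex:
  fixes \<sigma> :: "'a::ring_1 \<Rightarrow> 'a"
  assumes additive: "\<And>x y. \<sigma> (x + y) = \<sigma> x + \<sigma> y" and surj: "surj \<sigma>"
    and h: "\<And>a. a \<in> A \<Longrightarrow> (\<forall>i<N. h a $ i = 0) \<and> h a $ N = a"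
    and g: "\<forall>i<N + k. g $ i = 0" "g $ (N + k) \<in> right_span A"
  shows "\<exists>c. \<forall>i<N + Suc k. (g - (\<Sum>a\<in>A. skew_fps_mult \<sigma> (h a) (fps_const (c a) * fps_X ^ k))) $ i = 0"
proof -
  obtain r where r: "g $ (N + k) = (\<Sum>a\<in>A. a * r a)"
    using g(2) unfolding right_span_def by blast
  have "(\<sigma> ^^ N) (inv (\<sigma> ^^ N) (r a)) = r a" for a
    by (rule surj_f_inv_f[OF surj_fn[OF surj]])
  then have "g $ (N + k) = (\<Sum>a\<in>A. h a $ N * (\<sigma> ^^ N) (inv (\<sigma> ^^ N) (r a)))"
    using r h by (simp cong: sum.cong)
  then show ?thesis
    using h g(1) by (intro exI skew_fps_cancel_initial_coeff[OF additive]) auto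
qed

lemma skew_fps_eq_of_cutoff_approx:
  assumes "\<And>K. \<forall>i<K. (f - (\<Sum>a\<in>A. skew_fps_mult \<sigma> (h a) (fps_cutoff K (q a)))) $ i = 0"
  shows "f = (\<Sum>a\<in>A. skew_fps_mult \<sigma> (h a) (q a))"
proof (rule fps_ext)
  fix m
  have "f $ m = (\<Sum>a\<in>A. skew_fps_mult \<sigma> (h a) (fps_cutoff (Suc m) (q a)) $ m)"
    using assms[of "Suc m"] by (simp add: fps_sum_nth)
  also have "\<dots> = (\<Sum>a\<in>A. skew_fps_mult \<sigma> (h a) (q a) $ m)"
    by (intro sum.cong refl skew_fps_mult_nth_cong) simp
  finally show "f $ m = (\<Sum>a\<in>A. skew_fps_mult \<sigma> (h a) (q a)) $ m" by (simp add: fps_sum_nth)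
qed

text \<open>The multipliers \<open>q a\<close> of the elements \<open>h a \<in> I\<close> with initial coefficient \<open>a\<close> are built
  degree by degree: the coefficient \<open>C k (r k)\<close> of degree \<open>k\<close> kills the lowest coefficient of the
  remainder \<open>r k\<close>.\<close>

lemma skew_fps_high_order_mem:
  fixes \<sigma> :: "'a::ring_1 \<Rightarrow> 'a"
  assumes additive: "\<And>x y. \<sigma> (x + y) = \<sigma> x + \<sigma> y" and surj: "surj \<sigma>"
    and I: "right_ideal_wrt (skew_fps_mult \<sigma>) I" and J: "right_ideal_wrt (skew_fps_mult \<sigma>) J"
    and "I \<subseteq> J"
    and A: "A \<subseteq> initial_ideal N I" and span: "\<And>k. initial_ideal (N + k) J \<subseteq> right_span A"
    and f: "f \<in> J" "\<forall>i<N. f $ i = 0"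
  shows "f \<in> I"
proof -
  let ?mult = "skew_fps_mult \<sigma>"
  have "\<forall>a\<in>A. \<exists>g. g \<in> I \<and> (\<forall>i<N. g $ i = 0) \<and> g $ N = a"
    using A by (metis initial_idealE subsetD)
  then obtain h where h: "\<And>a. a \<in> A \<Longrightarrow> h a \<in> I \<and> (\<forall>i<N. h a $ i = 0) \<and> h a $ N = a"
    by (metis bchoice)
  define corr where "corr k c = (\<Sum>a\<in>A. ?mult (h a) (fps_const (c a) * fps_X ^ k))" for k c
  have corr: "corr k c \<in> I" for k c
    unfolding corr_def using h by (intro right_ideal_wrt_sum[OF I] right_ideal_wrt_mul[OF I]) simp
  define C where "C k g = (SOME c. \<forall>i<N + Suc k. (g - corr k c) $ i = 0)" for k g
  have C: "\<forall>i<N + Suc k. (g - corr k (C k g)) $ i = 0"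
    if "g \<in> J" "\<forall>i<N + k. g $ i = 0" for g k
  proof -
    have "g $ (N + k) \<in> right_span A" using span initial_idealI[OF that refl] by blast
    then have "\<exists>c. \<forall>i<N + Suc k. (g - corr k c) $ i = 0"
      unfolding corr_def using h that(2) by (intro skew_fps_cancel_initial_coeff_ex[OF additive surj]) auto
    then show ?thesis unfolding C_def by (rule someI_ex)
  qed
  define r where "r = rec_nat f (\<lambda>k g. g - corr k (C k g))"
  have r_0: "r 0 = f" and r_Suc: "r (Suc k) = r k - corr k (C k (r k))" for k
    by (simp_all add: r_def)
  have r: "r k \<in> J \<and> (\<forall>i<N + k. r k $ i = 0)" for k
  proof (induction k)
    case (Suc k)
    then show ?case
      unfolding r_Suc using C corr \<open>I \<subseteq> J\<close> by (blast intro: right_ideal_wrt_diff[OF J])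
  qed (use f r_0 in simp)
  define q where "q a = Abs_fps (\<lambda>k. C k (r k) a)" for a
  have partial_sums: "f - r K = (\<Sum>a\<in>A. ?mult (h a) (fps_cutoff K (q a)))" for K
  proof (induction K)
    case 0
    then show ?case by (simp add: r_0 skew_fps_mult_zero_right[OF additive])
  next
    case (Suc K)
    have "fps_cutoff (Suc K) (q a) = fps_cutoff K (q a) + fps_const (C K (r K) a) * fps_X ^ K" for a
      by (rule fps_ext) (auto simp: q_def less_Suc_eq)
    then show ?case
      by (simp add: r_Suc corr_def Suc.IH[symmetric] skew_fps_mult_add_right[OF additive]
          sum.distrib algebra_simps)
  qed
  have "f = (\<Sum>a\<in>A. ?mult (h a) (q a))"
    by (rule skew_fps_eq_of_cutoff_approx) (use r in \<open>simp add: partial_sums[symmetric]\<close>)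
  also have "\<dots> \<in> I"
    using h by (intro right_ideal_wrt_sum[OF I] right_ideal_wrt_mul[OF I]) simp
  finally show ?thesis .
qed

lemma right_ideal_wrt_subset_of_initial_ideals:
  fixes I J :: "'a::ab_group_add fps set"
  assumes I: "right_ideal_wrt mul I" and J: "right_ideal_wrt mul J" and "I \<subseteq> J"
    and initial: "\<And>n. initial_ideal n J \<subseteq> initial_ideal n I"
    and high_order: "\<And>f. f \<in> J \<Longrightarrow> \<forall>i<N. f $ i = 0 \<Longrightarrow> f \<in> I"
  shows "J \<subseteq> I"
proof -
  have "\<forall>f\<in>J. (\<forall>i<n. f $ i = 0) \<longrightarrow> f \<in> I" if "n \<le> N" for n
    using that
  proof (induction n rule: inc_induct)
    case (step n)
    show ?case
    proof (intro ballI impI)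
      fix f assume f: "f \<in> J" "\<forall>i<n. f $ i = 0"
      then have "f $ n \<in> initial_ideal n I" using initial by (blast intro: initial_idealI)
      then obtain g where g: "g \<in> I" "\<forall>i<n. g $ i = 0" "g $ n = f $ n"
        by (rule initial_idealE)
      have "\<forall>i<Suc n. (f - g) $ i = 0" using f(2) g by (auto simp: less_Suc_eq)
      moreover have "f - g \<in> J" using f(1) g(1) \<open>I \<subseteq> J\<close> by (blast intro: right_ideal_wrt_diff[OF J])
      ultimately have "(f - g) + g \<in> I" using step.IH g(1) by (blast intro: right_ideal_wrt_add[OF I])
      then show "f \<in> I" by simp
    qed
  qed (use high_order in blast)
  then show ?thesis by auto
qed

lemma skew_fps_right_ideal_eq_of_initial_ideals:
  fixes \<sigma> :: "'a::ring_1 \<Rightarrow> 'a"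
  assumes additive: "\<And>x y. \<sigma> (x + y) = \<sigma> x + \<sigma> y" and surj: "surj \<sigma>" and one: "\<sigma> 1 = 1"
    and noeth: "right_noetherian_wrt ((*) :: 'a \<Rightarrow> 'a \<Rightarrow> 'a)"
    and I: "right_ideal_wrt (skew_fps_mult \<sigma>) I" and J: "right_ideal_wrt (skew_fps_mult \<sigma>) J"
    and "I \<subseteq> J" and initial: "\<And>n. initial_ideal n J \<subseteq> initial_ideal n I"
  shows "I = J"
proof -
  have "\<exists>N. \<forall>n\<ge>N. initial_ideal n I = initial_ideal N I"
    by (rule right_noetherian_wrtD[OF noeth initial_ideal_right_ideal[OF additive surj I]])
      (simp add: initial_ideal_shift[OF additive one I])
  then obtain N where N: "\<And>n. N \<le> n \<Longrightarrow> initial_ideal n I = initial_ideal N I" by blast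
  obtain A where A: "A \<subseteq> initial_ideal N I" "initial_ideal N I \<subseteq> right_span A"
    using right_noetherian_finite_generators[OF noeth] by blast
  have "initial_ideal (N + k) J \<subseteq> right_span A" for k
    using initial[of "N + k"] N[of "N + k"] A(2) by simp
  then have "f \<in> I" if "f \<in> J" "\<forall>i<N. f $ i = 0" for f
    using skew_fps_high_order_mem[OF additive surj I J \<open>I \<subseteq> J\<close> A(1)] that by blast
  then show ?thesis
    using right_ideal_wrt_subset_of_initial_ideals[OF I J \<open>I \<subseteq> J\<close> initial] \<open>I \<subseteq> J\<close> by blast
qed

theorem theorem19:
  fixes \<sigma> :: "'a::ring_1 \<Rightarrow> 'a"
  assumes additive: "\<And>x y. \<sigma> (x + y) = \<sigma> x + \<sigma> y"
    and surj: "surj \<sigma>"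
    and one: "\<sigma> 1 = 1"
    and noeth: "right_noetherian_wrt ((*) :: 'a \<Rightarrow> 'a \<Rightarrow> 'a)"
  shows "right_noetherian_wrt (skew_fps_mult \<sigma>)"
  unfolding right_noetherian_wrt_def
proof (intro allI impI)
  fix I :: "nat \<Rightarrow> 'a fps set"
  assume chain: "(\<forall>n. right_ideal_wrt (skew_fps_mult \<sigma>) (I n)) \<and> (\<forall>n. I n \<subseteq> I (Suc n))"
  then have ideal: "\<And>n. right_ideal_wrt (skew_fps_mult \<sigma>) (I n)" by blast
  have mono: "I j \<subseteq> I j'" if "j \<le> j'" for j j'
    using chain lift_Suc_mono_le[of I, OF _ that] by blast
  have "\<exists>M. \<forall>n j. M \<le> j \<longrightarrow> initial_ideal n (I j) = initial_ideal n (I M)"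
  proof (rule right_noetherian_wrt_array_stable[OF noeth])
    show "right_ideal_wrt (*) (initial_ideal n (I j))" for n j
      by (rule initial_ideal_right_ideal[OF additive surj ideal])
    show "initial_ideal n (I j) \<subseteq> initial_ideal n' (I j')" if "n \<le> n'" "j \<le> j'" for n n' j j'
      using initial_ideal_mono[OF mono[OF that(2)]] initial_ideal_shift[OF additive one ideal that(1)]
      by blast
  qed
  then obtain M where M: "\<And>n j. M \<le> j \<Longrightarrow> initial_ideal n (I j) = initial_ideal n (I M)" by blast
  have "I M = I j" if "M \<le> j" for j
    using skew_fps_right_ideal_eq_of_initial_ideals[OF additive surj one noeth ideal ideal mono[OF that]]
    using M[OF that] by simp
  then show "\<exists>N. \<forall>n\<ge>N. I n = I N" by metis
qed

end
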